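(* Let $n\ge 2$. There is no finite subset $Y\subseteq\mathbb{S}^{n-1}$ which is a spherical design of harmonic index $\{8,4\}$ and has \[|Y|=\frac{(n+1)(n+2)(n+5)(n+6)}{252},\] i.e. there exists no tight spherical design of harmonic index $\{8,4\}$ on $\mathbb{S}^{n-1}$.
   Context: $\mathbb{S}^{n-1}$ is the unit sphere in $\mathbb{R}^n$. For $T\subseteq\mathbb{N}$, a finite $Y\subseteq\mathbb{S}^{n-1}$ is a spherical design of harmonic index $T$ if $\sum_{\mathbf{x}\in Y}f(\mathbf{x})=0$ for every real homogeneous harmonic polynomial $f$ in $n$ variables whose degree lies in $T$. With $Q_{n,k}$ the Gegenbauer polynomials (orthogonal on $[-1,1]$ for the weight $(1-x^2)^{(n-3)/2}$, $Q_{n,k}(1)=\binom{n+k-1}{n-1}-\binom{n+k-3}{n-1}$), the polynomial $L(x)=Q_{n,8}(x)+f_4Q_{n,4}(x)$ with $f_4=\frac{(n+4)(n+5)(n+14)}{60(n+12)}$ has the form $a(x^2-\alpha^2)^2(x^2-\beta^2)^2-c_{n,T}$ with $a>0$, $\alpha^2,\beta^2=\frac{7(n+8)\pm2\sqrt{7(n+5)(n+8)}}{(n+8)(n+12)}$, and $c_{n,T}=\frac{n(n+1)(n+4)(n+5)(n+10)(n+14)}{160(n+8)(n+12)}$; it yields the lower bound $|Y|\ge b_{n,T}=\frac{(n+1)(n+2)(n+5)(n+6)}{252}$ for designs of harmonic index $\{8,4\}$, and a design attaining it is called tight. *)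

theory Defs
  imports "HOL-Analysis.Analysis"
begin

text \<open>Real homogeneous polynomials of degree k in the n = CARD('n) coordinates of
  real^'n, represented by a real coefficient function on exponent vectors
  (only exponents of total degree k are used).\<close>

definition exps :: "nat \<Rightarrow> ('n::finite \<Rightarrow> nat) set" where
  "exps k = {\<alpha>. (\<Sum>i\<in>UNIV. \<alpha> i) = k}"

definition hpoly_eval :: "nat \<Rightarrow> (('n::finite \<Rightarrow> nat) \<Rightarrow> real) \<Rightarrow> real^'n \<Rightarrow> real" where
  "hpoly_eval k c x = (\<Sum>\<alpha>\<in>exps k. c \<alpha> * (\<Prod>i\<in>UNIV. (x $ i) ^ (\<alpha> i)))"

text \<open>Harmonic: the Laplacian vanishes, i.e. every coefficient of the (degree k-2)
  Laplacian is zero.  The coefficient of x^beta in the Laplacian of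
  sum c(alpha) x^alpha is sum_i (beta_i+2)(beta_i+1) c(beta + 2 e_i).\<close>

definition harmonic_hpoly :: "nat \<Rightarrow> (('n::finite \<Rightarrow> nat) \<Rightarrow> real) \<Rightarrow> bool" where
  "harmonic_hpoly k c \<longleftrightarrow>
     (\<forall>\<beta>::'n \<Rightarrow> nat. (\<Sum>i\<in>UNIV. \<beta> i) + 2 = k \<longrightarrow>
        (\<Sum>i\<in>UNIV. real ((\<beta> i + 2) * (\<beta> i + 1)) * c (\<beta>(i := \<beta> i + 2))) = 0)"

definition harmonic_index_design :: "nat set \<Rightarrow> (real^'n::finite) set \<Rightarrow> bool" where
  "harmonic_index_design T Y \<longleftrightarrow>
     finite Y \<and> Y \<subseteq> sphere 0 1 \<and>
     (\<forall>k\<in>T. \<forall>c. harmonic_hpoly k c \<longrightarrow> (\<Sum>x\<in>Y. hpoly_eval k c x) = 0)"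

end

theory Submission
  imports Defs "HOL-Computational_Algebra.Primes" "HOL-Computational_Algebra.Nth_Powers"
begin

text \<open>Delsarte's linear programming argument. For x0 in a tight design Y, the zonal
  harmonics of degrees 4 and 8 centred at x0 sum to zero over Y. The polynomial
  L = Q_{n,8} + f4 Q_{n,4} is, up to a positive factor and an additive constant, the square of
  a quadratic q in t^2. Summing q(<x0,x>^2)^2 over Y and using |Y| = b(n) shows that
  q(<x0,x>^2) = 0 for every x other than x0. So only two values of <x0,x>^2 occur, and the
  degree-4 condition then says that a signed count of the points times sqrt(112 (n+5) (n+8)) is
  a fixed polynomial in n. This forces 7 (n+5) (n+8) to be a perfect square and n - 2 to divide
  246960, and the finitely many remaining n are excluded by congruences.\<close>

section \<open>Coefficient calculus of polynomials\<close>

text \<open>A coefficient function c stands for the polynomial sum_alpha c(alpha) x^alpha;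
  mult_var j and diff_var j are multiplication by x_j and the partial derivative in x_j,
  acting on coefficients.\<close>

type_synonym 'n coeffs = "('n \<Rightarrow> nat) \<Rightarrow> real"

definition mult_var :: "'n \<Rightarrow> 'n coeffs \<Rightarrow> 'n coeffs" where
  "mult_var j c = (\<lambda>\<alpha>. if 0 < \<alpha> j then c (\<alpha>(j := \<alpha> j - 1)) else 0)"

definition diff_var :: "'n \<Rightarrow> 'n coeffs \<Rightarrow> 'n coeffs" where
  "diff_var j c = (\<lambda>\<beta>. real (\<beta> j + 1) * c (\<beta>(j := \<beta> j + 1)))"

lemma mult_var_add: "mult_var j (\<lambda>\<alpha>. f \<alpha> + g \<alpha>) = (\<lambda>\<alpha>. mult_var j f \<alpha> + mult_var j g \<alpha>)"
  by (auto simp: mult_var_def)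
lemma mult_var_scale: "mult_var j (\<lambda>\<alpha>. a * f \<alpha>) = (\<lambda>\<alpha>. a * mult_var j f \<alpha>)"
  by (auto simp: mult_var_def)
lemma mult_var_sum: "mult_var j (\<lambda>\<alpha>. \<Sum>k\<in>K. f k \<alpha>) = (\<lambda>\<alpha>. \<Sum>k\<in>K. mult_var j (f k) \<alpha>)"
  by (auto simp: mult_var_def)
lemma mult_var_zero: "mult_var j (\<lambda>\<alpha>. 0) = (\<lambda>\<alpha>. 0)"
  by (auto simp: mult_var_def)
lemma diff_var_add: "diff_var j (\<lambda>\<alpha>. f \<alpha> + g \<alpha>) = (\<lambda>\<alpha>. diff_var j f \<alpha> + diff_var j g \<alpha>)"
  by (auto simp: diff_var_def algebra_simps)
lemma diff_var_scale: "diff_var j (\<lambda>\<alpha>. a * f \<alpha>) = (\<lambda>\<alpha>. a * diff_var j f \<alpha>)"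
  by (auto simp: diff_var_def algebra_simps)
lemma diff_var_sum: "diff_var j (\<lambda>\<alpha>. \<Sum>k\<in>K. f k \<alpha>) = (\<lambda>\<alpha>. \<Sum>k\<in>K. diff_var j (f k) \<alpha>)"
  by (auto simp: diff_var_def sum_distrib_left)
lemma diff_var_zero: "diff_var j (\<lambda>\<alpha>. 0) = (\<lambda>\<alpha>. 0)"
  by (auto simp: diff_var_def)

lemma diff_var_mult_var: "diff_var j (mult_var l c) \<beta>
    = (if j = l then c \<beta> else 0) + mult_var l (diff_var j c) \<beta>"
proof (cases "j = l")
  case True
  show ?thesis
  proof (cases "\<beta> j = 0")
    case True
    with \<open>j = l\<close> show ?thesis by (simp add: mult_var_def diff_var_def)
  next
    case False
    then obtain m where m: "\<beta> j = Suc m" by (cases "\<beta> j") auto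
    then have "\<beta>(j := Suc m) = \<beta>" by auto
    with \<open>j = l\<close> m show ?thesis by (simp add: mult_var_def diff_var_def algebra_simps)
  qed
next
  case False
  then show ?thesis
    by (simp add: mult_var_def diff_var_def fun_upd_twist)
qed

lemma mult_var_commute: "mult_var i (mult_var l c) = mult_var l (mult_var i c)"
  by (cases "i = l") (auto simp: mult_var_def fun_upd_twist fun_eq_iff)

definition mult_inner :: "real^'n \<Rightarrow> 'n::finite coeffs \<Rightarrow> 'n coeffs" where
  "mult_inner y c = (\<lambda>\<alpha>. \<Sum>i\<in>UNIV. y$i * mult_var i c \<alpha>)"
definition mult_norm2 :: "'n::finite coeffs \<Rightarrow> 'n coeffs" where
  "mult_norm2 c = (\<lambda>\<alpha>. \<Sum>i\<in>UNIV. mult_var i (mult_var i c) \<alpha>)"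
definition diff_dir :: "real^'n \<Rightarrow> 'n::finite coeffs \<Rightarrow> 'n coeffs" where
  "diff_dir y c = (\<lambda>\<beta>. \<Sum>i\<in>UNIV. y$i * diff_var i c \<beta>)"
definition laplacian :: "'n::finite coeffs \<Rightarrow> 'n coeffs" where
  "laplacian c = (\<lambda>\<beta>. \<Sum>i\<in>UNIV. diff_var i (diff_var i c) \<beta>)"
definition euler :: "'n::finite coeffs \<Rightarrow> 'n coeffs" where
  "euler c = (\<lambda>\<alpha>. real (\<Sum>i\<in>UNIV. \<alpha> i) * c \<alpha>)"
definition one_coeffs :: "'n coeffs" where
  "one_coeffs = (\<lambda>\<alpha>. if \<alpha> = (\<lambda>_. 0) then 1 else 0)"

lemma mult_inner_add: "mult_inner y (\<lambda>\<alpha>. f \<alpha> + g \<alpha>) = (\<lambda>\<alpha>. mult_inner y f \<alpha> + mult_inner y g \<alpha>)"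
  by (simp add: mult_inner_def mult_var_add algebra_simps sum.distrib)
lemma mult_inner_scale: "mult_inner y (\<lambda>\<alpha>. a * f \<alpha>) = (\<lambda>\<alpha>. a * mult_inner y f \<alpha>)"
  by (simp add: mult_inner_def mult_var_scale algebra_simps sum_distrib_left)
lemma mult_inner_sum: "mult_inner y (\<lambda>\<alpha>. \<Sum>k\<in>K. f k \<alpha>) = (\<lambda>\<alpha>. \<Sum>k\<in>K. mult_inner y (f k) \<alpha>)"
  by (simp add: mult_inner_def mult_var_sum sum_distrib_left sum.swap[of _ UNIV K])
lemma mult_norm2_scale: "mult_norm2 (\<lambda>\<alpha>. a * f \<alpha>) = (\<lambda>\<alpha>. a * mult_norm2 f \<alpha>)"
  by (simp add: mult_norm2_def mult_var_scale algebra_simps sum_distrib_left)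
lemma mult_norm2_sum: "mult_norm2 (\<lambda>\<alpha>. \<Sum>k\<in>K. f k \<alpha>) = (\<lambda>\<alpha>. \<Sum>k\<in>K. mult_norm2 (f k) \<alpha>)"
  by (simp add: mult_norm2_def mult_var_sum sum.swap[of _ UNIV K])
lemma laplacian_add: "laplacian (\<lambda>\<alpha>. f \<alpha> + g \<alpha>) = (\<lambda>\<alpha>. laplacian f \<alpha> + laplacian g \<alpha>)"
  by (simp add: laplacian_def diff_var_add algebra_simps sum.distrib)
lemma laplacian_scale: "laplacian (\<lambda>\<alpha>. a * f \<alpha>) = (\<lambda>\<alpha>. a * laplacian f \<alpha>)"
  by (simp add: laplacian_def diff_var_scale algebra_simps sum_distrib_left)
lemma mult_norm2_zero: "mult_norm2 (\<lambda>\<alpha>. 0) = (\<lambda>\<alpha>. 0)"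
  by (simp add: mult_norm2_def mult_var_zero)
lemma diff_var_mult_inner: "diff_var i (mult_inner y c) \<beta>
    = y$i * c \<beta> + mult_inner y (diff_var i c) \<beta>"
proof -
  have "diff_var i (mult_inner y c) \<beta> = (\<Sum>l\<in>UNIV. y$l * diff_var i (mult_var l c) \<beta>)"
    unfolding mult_inner_def by (simp add: diff_var_sum diff_var_scale)
  also have "\<dots>
      = (\<Sum>l\<in>UNIV. y$l * (if i = l then c \<beta> else 0)) + (\<Sum>l\<in>UNIV. y$l * mult_var l (diff_var i c) \<beta>)"
    by (simp add: diff_var_mult_var algebra_simps sum.distrib)
  also have "\<dots> = y$i * c \<beta> + mult_inner y (diff_var i c) \<beta>"
    by (simp add: mult_inner_def if_distrib[of "(*) _"] cong: if_cong)
  finally show ?thesis .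
qed

lemma diff_var_mult_norm2: "diff_var i (mult_norm2 c) \<beta>
    = 2 * mult_var i c \<beta> + mult_norm2 (diff_var i c) \<beta>"
proof -
  have a: "mult_var l (diff_var i (mult_var l c))
      = (\<lambda>\<beta>. (if i = l then mult_var l c \<beta> else 0) + mult_var l (mult_var l (diff_var i c)) \<beta>)" for l
  proof -
    have "diff_var i (mult_var l c)
        = (\<lambda>\<beta>. (if i = l then c \<beta> else 0) + mult_var l (diff_var i c) \<beta>)"
      by (simp add: diff_var_mult_var fun_eq_iff)
    then show ?thesis by (cases "i = l") (simp_all add: mult_var_add mult_var_zero)
  qed
  have "diff_var i (mult_norm2 c) \<beta> = (\<Sum>l\<in>UNIV. diff_var i (mult_var l (mult_var l c)) \<beta>)"
    unfolding mult_norm2_def by (simp add: diff_var_sum)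
  also have "\<dots>
      = (\<Sum>l\<in>UNIV. (if i = l then mult_var l c \<beta> else 0) + mult_var l (diff_var i (mult_var l c)) \<beta>)"
    by (simp add: diff_var_mult_var)
  also have "\<dots>
      = (\<Sum>l\<in>UNIV. (if i = l then 2 * mult_var l c \<beta> else 0) + mult_var l (mult_var l (diff_var i c)) \<beta>)"
    by (intro sum.cong) (auto simp: a)
  also have "\<dots> = 2 * mult_var i c \<beta> + mult_norm2 (diff_var i c) \<beta>"
    by (simp add: sum.distrib mult_norm2_def)
  finally show ?thesis .
qed

lemma mult_var_diff_var_same: "mult_var i (diff_var i c) \<beta> = real (\<beta> i) * c \<beta>"
proof (cases "\<beta> i")
  case 0 then show ?thesis by (simp add: mult_var_def)
next
  case (Suc m)
  then have "\<beta>(i := Suc m) = \<beta>" by auto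
  then show ?thesis using Suc by (simp add: mult_var_def diff_var_def)
qed

lemma sum_mult_var_diff_var: "(\<Sum>i\<in>UNIV. mult_var i (diff_var i c) \<beta>) = euler c \<beta>"
  by (simp add: mult_var_diff_var_same euler_def sum_distrib_right)

lemma laplacian_mult_inner: "laplacian (mult_inner y c)
    = (\<lambda>\<beta>. 2 * diff_dir y c \<beta> + mult_inner y (laplacian c) \<beta>)"
proof -
  have a: "diff_var i (mult_inner y c) = (\<lambda>\<beta>. y$i * c \<beta> + mult_inner y (diff_var i c) \<beta>)" for i
    by (simp add: diff_var_mult_inner fun_eq_iff)
  have b: "diff_var i (diff_var i (mult_inner y c)) \<beta>
      = 2 * (y$i * diff_var i c \<beta>) + mult_inner y (diff_var i (diff_var i c)) \<beta>" for i \<beta>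
    by (simp add: a diff_var_add diff_var_scale diff_var_mult_inner)
  have c: "(\<Sum>i\<in>UNIV. mult_inner y (diff_var i (diff_var i c)) \<beta>)
      = mult_inner y (laplacian c) \<beta>" for \<beta>
    by (simp add: laplacian_def mult_inner_sum)
  show ?thesis
    by (simp add: laplacian_def b sum.distrib diff_dir_def sum_distrib_left fun_eq_iff c)
qed

lemma laplacian_mult_norm2: "laplacian (mult_norm2 c)
    = (\<lambda>\<beta>. 2 * real CARD('n) * c \<beta> + 4 * euler c \<beta> + mult_norm2 (laplacian c) \<beta>)"
  for c :: "'n::finite coeffs"
proof -
  have a: "diff_var i (mult_norm2 c) = (\<lambda>\<beta>. 2 * mult_var i c \<beta> + mult_norm2 (diff_var i c) \<beta>)" for i
    by (simp add: diff_var_mult_norm2 fun_eq_iff)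
  have b: "diff_var i (diff_var i (mult_norm2 c)) \<beta>
      = 2 * c \<beta> + 4 * mult_var i (diff_var i c) \<beta> + mult_norm2 (diff_var i (diff_var i c)) \<beta>" for i \<beta>
    by (simp add: a diff_var_add diff_var_scale diff_var_mult_norm2 diff_var_mult_var)
  have c: "(\<Sum>i\<in>UNIV. mult_norm2 (diff_var i (diff_var i c)) \<beta>) = mult_norm2 (laplacian c) \<beta>" for \<beta>
    by (simp add: laplacian_def mult_norm2_sum)
  have d: "(\<Sum>i\<in>UNIV. 4 * mult_var i (diff_var i c) \<beta>) = 4 * euler c \<beta>" for \<beta>
    by (simp add: sum_distrib_left[symmetric] sum_mult_var_diff_var)
  show ?thesis
    by (simp add: laplacian_def b sum.distrib fun_eq_iff c d)
qed

lemma diff_dir_mult_inner: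
  assumes "y \<bullet> y = 1"
  shows "diff_dir y (mult_inner y c) = (\<lambda>\<beta>. c \<beta> + mult_inner y (diff_dir y c) \<beta>)"
proof -
  have "diff_dir y (mult_inner y c) \<beta> = c \<beta> + mult_inner y (diff_dir y c) \<beta>" for \<beta>
  proof -
    have "diff_dir y (mult_inner y c) \<beta>
        = (\<Sum>i\<in>UNIV. y$i * (y$i * c \<beta> + mult_inner y (diff_var i c) \<beta>))"
      by (simp add: diff_dir_def diff_var_mult_inner)
    also have "\<dots> = (\<Sum>i\<in>UNIV. y$i * y$i) * c \<beta> + (\<Sum>i\<in>UNIV. y$i * mult_inner y (diff_var i c) \<beta>)"
      by (simp add: algebra_simps sum.distrib sum_distrib_right sum_distrib_left)
    also have "(\<Sum>i\<in>UNIV. y$i * mult_inner y (diff_var i c) \<beta>) = mult_inner y (diff_dir y c) \<beta>"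
      unfolding diff_dir_def by (simp add: mult_inner_sum mult_inner_scale)
    finally show ?thesis using assms by (simp add: inner_vec_def)
  qed
  then show ?thesis by (simp add: fun_eq_iff)
qed

lemma diff_dir_mult_norm2: "diff_dir y (mult_norm2 c)
    = (\<lambda>\<beta>. 2 * mult_inner y c \<beta> + mult_norm2 (diff_dir y c) \<beta>)"
proof -
  have "diff_dir y (mult_norm2 c) \<beta> = 2 * mult_inner y c \<beta> + mult_norm2 (diff_dir y c) \<beta>" for \<beta>
  proof -
    have "diff_dir y (mult_norm2 c) \<beta>
        = (\<Sum>i\<in>UNIV. y$i * (2 * mult_var i c \<beta> + mult_norm2 (diff_var i c) \<beta>))"
      by (simp add: diff_dir_def diff_var_mult_norm2)
    also have "\<dots> = 2 * mult_inner y c \<beta> + (\<Sum>i\<in>UNIV. y$i * mult_norm2 (diff_var i c) \<beta>)"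
      by (simp add: algebra_simps sum.distrib sum_distrib_left mult_inner_def)
    also have "(\<Sum>i\<in>UNIV. y$i * mult_norm2 (diff_var i c) \<beta>) = mult_norm2 (diff_dir y c) \<beta>"
      unfolding diff_dir_def by (simp add: mult_norm2_sum mult_norm2_scale)
    finally show ?thesis .
  qed
  then show ?thesis by (simp add: fun_eq_iff)
qed

lemma sum_fun_upd_nat:
  fixes \<alpha> :: "'n::finite \<Rightarrow> nat"
  shows "(\<Sum>i\<in>UNIV. (\<alpha>(j := v)) i) + \<alpha> j = (\<Sum>i\<in>UNIV. \<alpha> i) + v"
proof -
  have "(\<Sum>i\<in>UNIV. (\<alpha>(j := v)) i) = v + (\<Sum>i\<in>UNIV - {j}. \<alpha> i)"
    by (simp add: sum.remove[of UNIV j])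
  moreover have "(\<Sum>i\<in>UNIV. \<alpha> i) = \<alpha> j + (\<Sum>i\<in>UNIV - {j}. \<alpha> i)"
    by (simp add: sum.remove[of UNIV j])
  ultimately show ?thesis by simp
qed

lemma prod_power_fun_upd_Suc:
  fixes \<beta> :: "'n::finite \<Rightarrow> nat" and x :: "real^'n"
  shows "(\<Prod>i\<in>UNIV. x$i ^ (\<beta>(j := \<beta> j + 1)) i) = x$j * (\<Prod>i\<in>UNIV. x$i ^ \<beta> i)"
proof -
  have "(\<Prod>i\<in>UNIV. x$i ^ (\<beta>(j := \<beta> j + 1)) i) = x$j ^ (\<beta> j + 1) * (\<Prod>i\<in>UNIV - {j}. x$i ^ \<beta> i)"
    by (simp add: prod.remove[of UNIV j])
  moreover have "(\<Prod>i\<in>UNIV. x$i ^ \<beta> i) = x$j ^ \<beta> j * (\<Prod>i\<in>UNIV - {j}. x$i ^ \<beta> i)"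
    by (simp add: prod.remove[of UNIV j])
  ultimately show ?thesis by simp
qed

lemma euler_mult_var: "euler (mult_var j c) = (\<lambda>\<alpha>. mult_var j c \<alpha> + mult_var j (euler c) \<alpha>)"
proof (rule ext)
  fix \<alpha> :: "'a \<Rightarrow> nat"
  show "euler (mult_var j c) \<alpha> = mult_var j c \<alpha> + mult_var j (euler c) \<alpha>"
  proof (cases "0 < \<alpha> j")
    case True
    have "(\<Sum>i\<in>UNIV. (\<alpha>(j := \<alpha> j - 1)) i) + \<alpha> j = (\<Sum>i\<in>UNIV. \<alpha> i) + (\<alpha> j - 1)"
      by (rule sum_fun_upd_nat)
    then have "real (\<Sum>i\<in>UNIV. \<alpha> i) = real (\<Sum>i\<in>UNIV. (\<alpha>(j := \<alpha> j - 1)) i) + 1"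
      using True by linarith
    then show ?thesis using True by (simp add: euler_def mult_var_def algebra_simps)
  next
    case False then show ?thesis by (simp add: euler_def mult_var_def)
  qed
qed

lemma euler_sum: "euler (\<lambda>\<alpha>. \<Sum>k\<in>K. f k \<alpha>) = (\<lambda>\<alpha>. \<Sum>k\<in>K. euler (f k) \<alpha>)"
  by (simp add: euler_def sum_distrib_left)

lemma euler_mult_norm2: "euler (mult_norm2 c) = (\<lambda>\<alpha>. 2 * mult_norm2 c \<alpha> + mult_norm2 (euler c) \<alpha>)"
  unfolding mult_norm2_def
  by (simp add: euler_sum euler_mult_var mult_var_add algebra_simps sum.distrib sum_distrib_left)

lemma mult_inner_mult_norm2_commute: "mult_inner y (mult_norm2 c) = mult_norm2 (mult_inner y c)"
proof -
  have cm: "mult_var i (mult_var l (mult_var l c)) = mult_var l (mult_var l (mult_var i c))" for i l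
  proof -
    have "mult_var i (mult_var l (mult_var l c))
        = mult_var l (mult_var i (mult_var l c))" by (rule mult_var_commute)
    also have "mult_var i (mult_var l c) = mult_var l (mult_var i c)" by (rule mult_var_commute)
    finally show ?thesis .
  qed
  have "mult_inner y (mult_norm2 c) \<alpha> = mult_norm2 (mult_inner y c) \<alpha>" for \<alpha>
  proof -
    have "mult_inner y (mult_norm2 c) \<alpha>
        = (\<Sum>i\<in>UNIV. \<Sum>l\<in>UNIV. y$i * mult_var i (mult_var l (mult_var l c)) \<alpha>)"
      unfolding mult_norm2_def mult_inner_def by (simp add: mult_var_sum sum_distrib_left)
    also have "\<dots> = (\<Sum>l\<in>UNIV. \<Sum>i\<in>UNIV. y$i * mult_var l (mult_var l (mult_var i c)) \<alpha>)"
      by (subst sum.swap) (simp only: cm)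
    also have "\<dots> = mult_norm2 (mult_inner y c) \<alpha>"
      unfolding mult_norm2_def mult_inner_def by (simp add: mult_var_sum mult_var_scale)
    finally show ?thesis .
  qed
  then show ?thesis by (simp add: fun_eq_iff)
qed

lemma euler_one: "euler one_coeffs = (\<lambda>\<alpha>. 0)"
  by (auto simp: euler_def one_coeffs_def fun_eq_iff)
lemma diff_var_one: "diff_var i one_coeffs = (\<lambda>\<alpha>. 0)"
proof -
  have "\<beta>(i := Suc (\<beta> i)) \<noteq> (\<lambda>_. 0)" for \<beta> :: "'a \<Rightarrow> nat"
    by (metis fun_upd_same nat.distinct(1))
  then show ?thesis by (auto simp: diff_var_def one_coeffs_def fun_eq_iff)
qed
lemma diff_dir_one: "diff_dir y one_coeffs = (\<lambda>\<alpha>. 0)"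
  by (simp add: diff_dir_def diff_var_one)
lemma laplacian_one: "laplacian one_coeffs = (\<lambda>\<alpha>. 0)"
  by (simp add: laplacian_def diff_var_one diff_var_zero)

definition norm2_pow :: "nat \<Rightarrow> 'n::finite coeffs" where
  "norm2_pow b = (mult_norm2 ^^ b) one_coeffs"

definition mult_inner_pow :: "real^'n \<Rightarrow> nat \<Rightarrow> 'n::finite coeffs \<Rightarrow> 'n coeffs" where
  "mult_inner_pow y a c = (mult_inner y ^^ a) c"

definition zonal_mono :: "real^'n \<Rightarrow> nat \<Rightarrow> nat \<Rightarrow> 'n::finite coeffs" where
  "zonal_mono y a b = mult_inner_pow y a (norm2_pow b)"

lemma norm2_pow_Suc: "norm2_pow (Suc b) = mult_norm2 (norm2_pow b)"
  by (simp add: norm2_pow_def)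

lemma mult_inner_pow_0: "mult_inner_pow y 0 c = c"
  by (simp add: mult_inner_pow_def)

lemma mult_inner_pow_Suc: "mult_inner_pow y (Suc a) c = mult_inner y (mult_inner_pow y a c)"
  by (simp add: mult_inner_pow_def)

lemma mult_inner_pow_Suc': "mult_inner_pow y (Suc a) c = mult_inner_pow y a (mult_inner y c)"
  by (simp add: mult_inner_pow_def funpow_swap1)

lemma mult_inner_pow_scale:
  "mult_inner_pow y a (\<lambda>\<beta>. k * f \<beta>) = (\<lambda>\<beta>. k * mult_inner_pow y a f \<beta>)"
  by (induction a) (simp_all add: mult_inner_pow_0 mult_inner_pow_Suc mult_inner_scale)

lemma euler_norm2_pow: "euler (norm2_pow b) = (\<lambda>\<alpha>. real (2*b) * norm2_pow b \<alpha>)"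
proof (induction b)
  case 0
  then show ?case by (simp add: norm2_pow_def euler_one)
next
  case (Suc b)
  then show ?case by (simp add: norm2_pow_Suc euler_mult_norm2 mult_norm2_scale algebra_simps)
qed

lemma diff_dir_norm2_pow:
  "diff_dir y (norm2_pow b) = (\<lambda>\<alpha>. real (2*b) * mult_inner y (norm2_pow (b-1)) \<alpha>)"
proof (induction b)
  case 0
  then show ?case by (simp add: norm2_pow_def diff_dir_one)
next
  case (Suc b)
  have step: "diff_dir y (norm2_pow (Suc b))
      = (\<lambda>\<beta>. 2 * mult_inner y (norm2_pow b) \<beta> + mult_norm2 (diff_dir y (norm2_pow b)) \<beta>)"
    by (simp add: norm2_pow_Suc diff_dir_mult_norm2)
  show ?case
  proof (cases b)
    case 0
    then show ?thesis using step by (simp add: norm2_pow_def diff_dir_one mult_norm2_zero)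
  next
    case (Suc b')
    have "mult_norm2 (diff_dir y (norm2_pow b))
        = (\<lambda>\<alpha>. real (2*b) * mult_norm2 (mult_inner y (norm2_pow (b-1))) \<alpha>)"
      by (simp only: Suc.IH mult_norm2_scale)
    also have "\<dots> = (\<lambda>\<alpha>. real (2*b) * mult_inner y (norm2_pow b) \<alpha>)"
      using Suc by (simp add: mult_inner_mult_norm2_commute[symmetric] norm2_pow_Suc)
    finally show ?thesis using step by (simp add: algebra_simps)
  qed
qed

lemma laplacian_norm2_pow:
  "laplacian (norm2_pow b)
     = (\<lambda>\<alpha>. real (2*b) * (real CARD('n) + 2 * real b - 2) * (norm2_pow (b-1) :: 'n::finite coeffs) \<alpha>)"
proof (induction b)
  case 0
  then show ?case by (simp add: norm2_pow_def laplacian_one)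
next
  case (Suc b)
  have step: "laplacian (norm2_pow (Suc b) :: 'n coeffs)
      = (\<lambda>\<beta>. 2 * real CARD('n) * norm2_pow b \<beta> + 4 * euler (norm2_pow b) \<beta>
              + mult_norm2 (laplacian (norm2_pow b)) \<beta>)"
    by (simp add: norm2_pow_Suc laplacian_mult_norm2)
  show ?case
  proof (cases b)
    case 0
    then show ?thesis
      using step by (simp add: norm2_pow_def laplacian_one euler_one mult_norm2_zero)
  next
    case (Suc b')
    have "mult_norm2 (laplacian (norm2_pow b :: 'n coeffs))
        = (\<lambda>\<alpha>. real (2*b) * (real CARD('n) + 2 * real b - 2) * mult_norm2 (norm2_pow (b-1)) \<alpha>)"
      by (simp only: Suc.IH mult_norm2_scale)
    also have "\<dots> = (\<lambda>\<alpha>. real (2*b) * (real CARD('n) + 2 * real b - 2) * norm2_pow b \<alpha>)"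
      using Suc by (simp add: norm2_pow_Suc)
    finally show ?thesis
      using step by (simp add: euler_norm2_pow algebra_simps fun_eq_iff)
  qed
qed

lemma diff_dir_mult_inner_pow:
  assumes "y \<bullet> y = 1"
  shows "diff_dir y (mult_inner_pow y a c)
      = (\<lambda>\<beta>. mult_inner_pow y a (diff_dir y c) \<beta> + real a * mult_inner_pow y (a-1) c \<beta>)"
proof (induction a)
  case 0
  then show ?case by (simp add: mult_inner_pow_0)
next
  case (Suc a)
  then show ?case
    by (cases a)
      (simp_all add: mult_inner_pow_Suc mult_inner_pow_0 diff_dir_mult_inner[OF assms]
        mult_inner_add mult_inner_scale algebra_simps fun_eq_iff)
qed

lemma laplacian_mult_inner_pow:
  assumes "y \<bullet> y = 1"
  shows "laplacian (mult_inner_pow y a c)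
      = (\<lambda>\<beta>. mult_inner_pow y a (laplacian c) \<beta> + real (2*a) * mult_inner_pow y (a-1) (diff_dir y c) \<beta>
              + real (a*(a-1)) * mult_inner_pow y (a-2) c \<beta>)"
proof (induction a)
  case 0
  then show ?case by (simp add: mult_inner_pow_0)
next
  case (Suc a)
  consider "a = 0" | "a = 1" | a' where "a = Suc (Suc a')"
    by (metis One_nat_def not0_implies_Suc)
  then show ?case
  proof cases
    case 1
    then show ?thesis
      by (simp add: mult_inner_pow_Suc mult_inner_pow_0 laplacian_mult_inner algebra_simps)
  next
    case 2
    then show ?thesis
      using Suc.IH by (simp add: mult_inner_pow_Suc mult_inner_pow_0 laplacian_mult_inner
          diff_dir_mult_inner[OF assms] mult_inner_add mult_inner_scale algebra_simps fun_eq_iff)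
  next
    case 3
    then show ?thesis
      using Suc.IH diff_dir_mult_inner_pow[OF assms, of a c]
      by (simp add: mult_inner_pow_Suc laplacian_mult_inner mult_inner_add mult_inner_scale
          algebra_simps fun_eq_iff)
  qed
qed

lemma laplacian_zonal_mono:
  assumes "y \<bullet> y = 1"
  shows "laplacian (zonal_mono y a b)
      = (\<lambda>\<beta>. (real (2*b) * (real CARD('n) + 2 * real b - 2) + real (4*a*b))
                * (zonal_mono y a (b-1) :: 'n::finite coeffs) \<beta>
              + real (a*(a-1)) * zonal_mono y (a-2) b \<beta>)"
proof -
  have diff_dir_term: "real (2*a) * mult_inner_pow y (a-1) (diff_dir y (norm2_pow b)) \<beta>
      = real (4*a*b) * mult_inner_pow y a (norm2_pow (b-1)) \<beta>" for \<beta>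
  proof (cases a)
    case (Suc a')
    have "mult_inner_pow y (a-1) (diff_dir y (norm2_pow b))
        = (\<lambda>\<beta>. real (2*b) * mult_inner_pow y (a-1) (mult_inner y (norm2_pow (b-1))) \<beta>)"
      by (simp only: diff_dir_norm2_pow mult_inner_pow_scale)
    also have "\<dots> = (\<lambda>\<beta>. real (2*b) * mult_inner_pow y a (norm2_pow (b-1)) \<beta>)"
      using Suc by (simp add: mult_inner_pow_Suc')
    finally show ?thesis by simp
  qed simp
  show ?thesis
  proof
    fix \<beta>
    have "laplacian (zonal_mono y a b) \<beta> = mult_inner_pow y a (laplacian (norm2_pow b)) \<beta>
          + real (2*a) * mult_inner_pow y (a-1) (diff_dir y (norm2_pow b)) \<beta>
          + real (a*(a-1)) * mult_inner_pow y (a-2) (norm2_pow b) \<beta>"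
      unfolding zonal_mono_def laplacian_mult_inner_pow[OF assms] ..
    also have "\<dots> = real (2*b) * (real CARD('n) + 2 * real b - 2) * mult_inner_pow y a (norm2_pow (b-1)) \<beta>
          + real (4*a*b) * mult_inner_pow y a (norm2_pow (b-1)) \<beta>
          + real (a*(a-1)) * mult_inner_pow y (a-2) (norm2_pow b) \<beta>"
      by (simp only: laplacian_norm2_pow mult_inner_pow_scale diff_dir_term)
    finally show "laplacian (zonal_mono y a b) \<beta>
        = (real (2*b) * (real CARD('n) + 2 * real b - 2) + real (4*a*b)) * zonal_mono y a (b-1) \<beta>
          + real (a*(a-1)) * zonal_mono y (a-2) b \<beta>"
      by (simp add: zonal_mono_def algebra_simps)
  qed
qed

lemma finite_exps: "finite (exps k :: ('n::finite \<Rightarrow> nat) set)"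
proof -
  have "exps k \<subseteq> PiE (UNIV::'n set) (\<lambda>_. {..k})"
  proof
    fix \<alpha> :: "'n \<Rightarrow> nat" assume a: "\<alpha> \<in> exps k"
    have "\<alpha> i \<le> k" for i
    proof -
      have "\<alpha> i \<le> (\<Sum>j\<in>UNIV. \<alpha> j)" by (rule member_le_sum) auto
      then show ?thesis using a by (simp add: exps_def)
    qed
    then show "\<alpha> \<in> PiE UNIV (\<lambda>_. {..k})" by (auto simp: PiE_def extensional_def)
  qed
  moreover have "finite (PiE (UNIV::'n set) (\<lambda>_. {..k}))" by (intro finite_PiE) auto
  ultimately show ?thesis by (rule finite_subset)
qed

lemma hpoly_eval_add: "hpoly_eval k (\<lambda>\<alpha>. f \<alpha> + g \<alpha>) x = hpoly_eval k f x + hpoly_eval k g x"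
  by (simp add: hpoly_eval_def algebra_simps sum.distrib)
lemma hpoly_eval_scale: "hpoly_eval k (\<lambda>\<alpha>. a * f \<alpha>) x = a * hpoly_eval k f x"
  by (simp add: hpoly_eval_def algebra_simps sum_distrib_left)
lemma hpoly_eval_sum: "hpoly_eval k (\<lambda>\<alpha>. \<Sum>i\<in>I. f i \<alpha>) x = (\<Sum>i\<in>I. hpoly_eval k (f i) x)"
  by (simp add: hpoly_eval_def sum_distrib_right sum.swap[of _ I])

lemma hpoly_eval_one: "hpoly_eval 0 one_coeffs x = 1"
proof -
  have "exps 0 = {(\<lambda>_. 0) :: 'a \<Rightarrow> nat}" by (auto simp: exps_def)
  then show ?thesis by (simp add: hpoly_eval_def one_coeffs_def)
qed

lemma hpoly_eval_mult_var: "hpoly_eval (Suc k) (mult_var j c) x = x$j * hpoly_eval k c x"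
proof -
  let ?h = "\<lambda>\<beta>::'a\<Rightarrow>nat. \<beta>(j := \<beta> j + 1)"
  let ?A = "{\<alpha> \<in> exps (Suc k). 0 < \<alpha> j}"
  have bij: "bij_betw ?h (exps k) ?A"
  proof (rule bij_betw_byWitness[where f' = "\<lambda>\<alpha>. \<alpha>(j := \<alpha> j - 1)"])
    show "\<forall>\<beta>\<in>exps k. (?h \<beta>)(j := ?h \<beta> j - 1) = \<beta>" by auto
    show "\<forall>\<alpha>\<in>?A. ?h (\<alpha>(j := \<alpha> j - 1)) = \<alpha>" by auto
    show "?h ` exps k \<subseteq> ?A"
    proof
      fix \<alpha> assume "\<alpha> \<in> ?h ` exps k"
      then obtain \<beta> where b: "\<beta> \<in> exps k" "\<alpha> = ?h \<beta>" by auto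
      have "(\<Sum>i\<in>UNIV. (\<beta>(j := \<beta> j + 1)) i) + \<beta> j = (\<Sum>i\<in>UNIV. \<beta> i) + (\<beta> j + 1)"
        by (rule sum_fun_upd_nat)
      then show "\<alpha> \<in> ?A" using b by (simp add: exps_def)
    qed
    show "(\<lambda>\<alpha>. \<alpha>(j := \<alpha> j - 1)) ` ?A \<subseteq> exps k"
    proof
      fix \<beta> assume "\<beta> \<in> (\<lambda>\<alpha>. \<alpha>(j := \<alpha> j - 1)) ` ?A"
      then obtain \<alpha> where a: "\<alpha> \<in> ?A" "\<beta> = \<alpha>(j := \<alpha> j - 1)" by auto
      have "(\<Sum>i\<in>UNIV. (\<alpha>(j := \<alpha> j - 1)) i) + \<alpha> j = (\<Sum>i\<in>UNIV. \<alpha> i) + (\<alpha> j - 1)"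
        by (rule sum_fun_upd_nat)
      then show "\<beta> \<in> exps k" using a by (simp add: exps_def)
    qed
  qed
  have "hpoly_eval (Suc k) (mult_var j c) x
      = (\<Sum>\<alpha>\<in>exps (Suc k). (if 0 < \<alpha> j then c (\<alpha>(j := \<alpha> j - 1)) * (\<Prod>i\<in>UNIV. x$i ^ \<alpha> i) else 0))"
    unfolding hpoly_eval_def by (intro sum.cong refl) (simp add: mult_var_def)
  also have "\<dots> = (\<Sum>\<alpha>\<in>?A. c (\<alpha>(j := \<alpha> j - 1)) * (\<Prod>i\<in>UNIV. x$i ^ \<alpha> i))"
    by (rule sum.inter_filter[OF finite_exps, symmetric])
  also have "\<dots> = (\<Sum>\<beta>\<in>exps k. c ((?h \<beta>)(j := ?h \<beta> j - 1)) * (\<Prod>i\<in>UNIV. x$i ^ (?h \<beta>) i))"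
    by (rule sum.reindex_bij_betw[OF bij, symmetric])
  also have "\<dots> = (\<Sum>\<beta>\<in>exps k. x$j * (c \<beta> * (\<Prod>i\<in>UNIV. x$i ^ \<beta> i)))"
    by (intro sum.cong refl) (simp only: prod_power_fun_upd_Suc, simp)
  also have "\<dots> = x$j * hpoly_eval k c x"
    by (simp add: hpoly_eval_def sum_distrib_left)
  finally show ?thesis .
qed

lemma hpoly_eval_mult_inner: "hpoly_eval (Suc k) (mult_inner y c) x = (y \<bullet> x) * hpoly_eval k c x"
proof -
  have "hpoly_eval (Suc k) (mult_inner y c) x
      = (\<Sum>i\<in>UNIV. hpoly_eval (Suc k) (\<lambda>\<alpha>. y$i * mult_var i c \<alpha>) x)"
    unfolding mult_inner_def by (rule hpoly_eval_sum)
  also have "\<dots> = (\<Sum>i\<in>UNIV. y$i * hpoly_eval (Suc k) (mult_var i c) x)"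
    by (simp only: hpoly_eval_scale)
  also have "\<dots> = (\<Sum>i\<in>UNIV. y$i * (x$i * hpoly_eval k c x))"
    by (simp only: hpoly_eval_mult_var)
  also have "\<dots> = (y \<bullet> x) * hpoly_eval k c x"
    by (simp add: inner_vec_def sum_distrib_right mult.assoc)
  finally show ?thesis .
qed

lemma hpoly_eval_mult_norm2: "hpoly_eval (Suc (Suc k)) (mult_norm2 c) x
    = (x \<bullet> x) * hpoly_eval k c x"
proof -
  have "hpoly_eval (Suc (Suc k)) (mult_norm2 c) x
      = (\<Sum>i\<in>UNIV. hpoly_eval (Suc (Suc k)) (mult_var i (mult_var i c)) x)"
    unfolding mult_norm2_def by (rule hpoly_eval_sum)
  also have "\<dots> = (\<Sum>i\<in>UNIV. x$i * (x$i * hpoly_eval k c x))"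
    by (simp only: hpoly_eval_mult_var)
  also have "\<dots> = (x \<bullet> x) * hpoly_eval k c x"
    by (simp add: inner_vec_def sum_distrib_right mult.assoc)
  finally show ?thesis .
qed

lemma hpoly_eval_norm2_pow: "hpoly_eval (2*b) (norm2_pow b) x = (x \<bullet> x) ^ b"
proof (induction b)
  case 0 show ?case by (simp add: norm2_pow_def hpoly_eval_one)
next
  case (Suc b)
  have e: "2 * Suc b = Suc (Suc (2*b))" by simp
  show ?case by (simp only: e norm2_pow_Suc hpoly_eval_mult_norm2 Suc.IH power_Suc)
qed

lemma hpoly_eval_zonal_mono: "hpoly_eval (a + 2*b) (zonal_mono y a b) x = (y \<bullet> x) ^ a * (x \<bullet> x) ^ b"
proof (induction a)
  case 0 show ?case by (simp add: zonal_mono_def mult_inner_pow_0 hpoly_eval_norm2_pow)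
next
  case (Suc a)
  have e: "Suc a + 2 * b = Suc (a + 2*b)" by simp
  have m: "zonal_mono y (Suc a) b = mult_inner y (zonal_mono y a b)"
    by (simp add: zonal_mono_def mult_inner_pow_Suc)
  show ?case by (simp only: e m hpoly_eval_mult_inner Suc.IH power_Suc mult.assoc)
qed

lemma harmonic_hpoly_if_laplacian_zero:
  assumes "laplacian c = (\<lambda>\<beta>. 0)"
  shows "harmonic_hpoly k c"
  unfolding harmonic_hpoly_def
proof (intro allI impI)
  fix \<beta> :: "'a \<Rightarrow> nat"
  have "(\<Sum>i\<in>UNIV. real ((\<beta> i + 2) * (\<beta> i + 1)) * c (\<beta>(i := \<beta> i + 2))) = laplacian c \<beta>"
    unfolding laplacian_def diff_var_def by (intro sum.cong) (simp_all add: algebra_simps)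
  then show "(\<Sum>i\<in>UNIV. real ((\<beta> i + 2) * (\<beta> i + 1)) * c (\<beta>(i := \<beta> i + 2))) = 0"
    using assms by simp
qed

section \<open>Zonal harmonics of degrees 4 and 8\<close>

text \<open>Monic multiples of the Gegenbauer polynomials Q_{m,4} and Q_{m,8}.\<close>

definition gegenbauer4 :: "real \<Rightarrow> real \<Rightarrow> real" where
  "gegenbauer4 m t = t^4 - 6/(m+4) * t^2 + 3/((m+2)*(m+4))"

definition gegenbauer8 :: "real \<Rightarrow> real \<Rightarrow> real" where
  "gegenbauer8 m t = t^8 - 28/(m+12) * t^6 + 210/((m+10)*(m+12)) * t^4
     - 420/((m+8)*(m+10)*(m+12)) * t^2 + 105/((m+6)*(m+8)*(m+10)*(m+12))"

lemma zonal_harmonic_4: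
  fixes y :: "real^'n::finite"
  assumes y: "y \<bullet> y = 1"
  obtains c where "harmonic_hpoly 4 c"
    and "\<And>x. x \<bullet> x = 1 \<Longrightarrow> hpoly_eval 4 c x = gegenbauer4 (real CARD('n)) (y \<bullet> x)"
proof -
  define m where "m = real CARD('n)"
  define k1 k2 where "k1 = -6/(m+4)" and "k2 = 3/((m+2)*(m+4))"
  define c where "c = (\<lambda>\<alpha>. zonal_mono y 4 0 \<alpha> + k1 * zonal_mono y 2 1 \<alpha> + k2 * zonal_mono y 0 2 \<alpha>)"
  have m: "m + 2 > 0" "m + 4 > 0" unfolding m_def by linarith+
  have "laplacian c = (\<lambda>\<beta>. (12 + k1*(2*m+8)) * zonal_mono y 2 0 \<beta>
                              + (2*k1 + k2*(4*m+8)) * zonal_mono y 0 1 \<beta>)"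
    unfolding c_def
    by (simp only: laplacian_add laplacian_scale)
      (simp add: laplacian_zonal_mono[OF y] algebra_simps fun_eq_iff m_def)
  moreover have "12 + k1*(2*m+8) = 0" "2*k1 + k2*(4*m+8) = 0"
    unfolding k1_def k2_def using m by (simp add: divide_simps; simp add: algebra_simps)+
  ultimately have "harmonic_hpoly 4 c"
    by (intro harmonic_hpoly_if_laplacian_zero) simp
  moreover have "hpoly_eval 4 c x = gegenbauer4 m (y \<bullet> x)" if "x \<bullet> x = 1" for x
    using hpoly_eval_zonal_mono[of 4 0 y x] hpoly_eval_zonal_mono[of 2 1 y x]
      hpoly_eval_zonal_mono[of 0 2 y x] that
    unfolding c_def hpoly_eval_add hpoly_eval_scale by (simp add: gegenbauer4_def k1_def k2_def)
  ultimately show thesis using that unfolding m_def by blast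
qed

lemma zonal_harmonic_8:
  fixes y :: "real^'n::finite"
  assumes y: "y \<bullet> y = 1"
  obtains c where "harmonic_hpoly 8 c"
    and "\<And>x. x \<bullet> x = 1 \<Longrightarrow> hpoly_eval 8 c x = gegenbauer8 (real CARD('n)) (y \<bullet> x)"
proof -
  define m where "m = real CARD('n)"
  define k1 k2 k3 k4 where "k1 = -28/(m+12)" and "k2 = 210/((m+10)*(m+12))"
    and "k3 = -420/((m+8)*(m+10)*(m+12))" and "k4 = 105/((m+6)*(m+8)*(m+10)*(m+12))"
  define c where "c = (\<lambda>\<alpha>. zonal_mono y 8 0 \<alpha> + k1 * zonal_mono y 6 1 \<alpha> + k2 * zonal_mono y 4 2 \<alpha>
                          + k3 * zonal_mono y 2 3 \<alpha> + k4 * zonal_mono y 0 4 \<alpha>)"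
  have m: "m + 6 > 0" "m + 8 > 0" "m + 10 > 0" "m + 12 > 0" unfolding m_def by linarith+
  have "laplacian c = (\<lambda>\<beta>. (56 + k1*(2*m+24)) * zonal_mono y 6 0 \<beta>
        + (30*k1 + k2*(4*m+40)) * zonal_mono y 4 1 \<beta> + (12*k2 + k3*(6*m+48)) * zonal_mono y 2 2 \<beta>
        + (2*k3 + k4*(8*m+48)) * zonal_mono y 0 3 \<beta>)"
    unfolding c_def
    by (simp only: laplacian_add laplacian_scale)
      (simp add: laplacian_zonal_mono[OF y] algebra_simps fun_eq_iff m_def)
  moreover have "56 + k1*(2*m+24) = 0" "30*k1 + k2*(4*m+40) = 0"
    "12*k2 + k3*(6*m+48) = 0" "2*k3 + k4*(8*m+48) = 0"
    unfolding k1_def k2_def k3_def k4_def using m by (simp add: divide_simps; simp add: algebra_simps)+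
  ultimately have "harmonic_hpoly 8 c"
    by (intro harmonic_hpoly_if_laplacian_zero) simp
  moreover have "hpoly_eval 8 c x = gegenbauer8 m (y \<bullet> x)" if "x \<bullet> x = 1" for x
    using hpoly_eval_zonal_mono[of 8 0 y x] hpoly_eval_zonal_mono[of 6 1 y x]
      hpoly_eval_zonal_mono[of 4 2 y x] hpoly_eval_zonal_mono[of 2 3 y x]
      hpoly_eval_zonal_mono[of 0 4 y x] that
    unfolding c_def hpoly_eval_add hpoly_eval_scale
    by (simp add: gegenbauer8_def k1_def k2_def k3_def k4_def)
  ultimately show thesis using that unfolding m_def by blast
qed

lemma design_sum_zonal:
  fixes Y :: "(real^'n::finite) set"
  assumes "harmonic_index_design T Y" "k \<in> T" "harmonic_hpoly k c"
    and "\<And>x. x \<bullet> x = 1 \<Longrightarrow> hpoly_eval k c x = g x"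
  shows "(\<Sum>x\<in>Y. g x) = 0"
proof -
  have "x \<bullet> x = 1" if "x \<in> Y" for x
    using assms(1) that by (auto simp: harmonic_index_design_def dot_square_norm)
  then have "(\<Sum>x\<in>Y. g x) = (\<Sum>x\<in>Y. hpoly_eval k c x)"
    using assms(4) by simp
  also have "\<dots> = 0"
    using assms(1-3) unfolding harmonic_index_design_def by blast
  finally show ?thesis .
qed

section \<open>The Delsarte argument for a tight configuration\<close>

lemma sum_squares_eq_term_imp_zero:
  fixes g :: "'a \<Rightarrow> real"
  assumes "finite Y" "x0 \<in> Y" "(\<Sum>x\<in>Y. (g x)^2) = (g x0)^2" "x \<in> Y" "x \<noteq> x0"
  shows "g x = 0"
proof -
  have "(\<Sum>x\<in>Y - {x0}. (g x)^2) = 0"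
    using assms(1-3) by (simp add: sum.remove)
  then show ?thesis
    using assms(1,4,5) by (subst (asm) sum_nonneg_eq_0_iff) auto
qed

lemma sum_plus_minus_eq_int_mult:
  fixes v :: "'a \<Rightarrow> real"
  assumes "finite A" "\<And>x. x \<in> A \<Longrightarrow> v x = w \<or> v x = - w"
  obtains e :: int where "(\<Sum>x\<in>A. v x) = of_int e * w"
  using assms
proof (induction A arbitrary: thesis rule: finite_induct)
  case empty
  then show ?case by (metis mult_zero_left of_int_0 sum.empty)
next
  case (insert a A)
  obtain e :: int where e: "(\<Sum>x\<in>A. v x) = of_int e * w"
    using insert.IH insert.prems(2) by blast
  from insert.prems(2)[of a] consider "v a = w" | "v a = - w" by auto
  then show ?case
  proof cases
    case 1
    then show ?thesis using insert.hyps insert.prems(1)[of "e + 1"] e by (simp add: algebra_simps)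
  next
    case 2
    then show ?thesis using insert.hyps insert.prems(1)[of "e - 1"] e by (simp add: algebra_simps)
  qed
qed

text \<open>The right-hand side is a positive multiple of L + c_{n,T}; the quadratic in t^2 on the
  left has the roots alpha^2 and beta^2.\<close>

lemma tight84_annihilator_identity:
  fixes m t :: real
  assumes "0 \<le> m"
  shows "((m+8)*(m+12)*t^4 - 14*(m+8)*t^2 + 21)^2
       = ((m+8)*(m+12))^2 * (gegenbauer8 m t + 28*(m+4)*(m+5)/((m+8)*(m+10)*(m+12)^2) * gegenbauer4 m t)
         + 252*(m+1)*(m+5)/((m+2)*(m+6))"
proof -
  have "m+2 > 0" "m+4 > 0" "m + 6 > 0" "m + 8 > 0" "m + 10 > 0" "m + 12 > 0"
    using assms by linarith+
  then show ?thesis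
    unfolding gegenbauer4_def gegenbauer8_def by (simp add: divide_simps; algebra)
qed

lemma gegenbauer4_at_root:
  fixes m t :: real
  assumes "0 \<le> m" "(m+8)*(m+12)*t^4 - 14*(m+8)*t^2 + 21 = 0"
  shows "gegenbauer4 m t = 8*(m-2)/((m+4)*(m+12)) * t^2 + (3/((m+2)*(m+4)) - 21/((m+8)*(m+12)))"
proof -
  have "m+2 > 0" "m+4 > 0" "m + 8 > 0" "m + 12 > 0"
    using assms(1) by linarith+
  then have "gegenbauer4 m t - (8*(m-2)/((m+4)*(m+12)) * t^2 + (3/((m+2)*(m+4)) - 21/((m+8)*(m+12))))
      = ((m+8)*(m+12)*t^4 - 14*(m+8)*t^2 + 21) / ((m+8)*(m+12))"
    unfolding gegenbauer4_def by (simp add: divide_simps; algebra)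
  then show ?thesis
    using assms(2) by simp
qed

lemma completed_square_at_root:
  fixes m u :: real
  assumes "(m+8)*(m+12)*u^2 - 14*(m+8)*u + 21 = 0"
  shows "(2*(m+8)*(m+12)*u - 14*(m+8))^2 = 112*(m+5)*(m+8)"
proof -
  have "(2*(m+8)*(m+12)*u - 14*(m+8))^2
      = 4*(m+8)*(m+12)*((m+8)*(m+12)*u^2 - 14*(m+8)*u + 21) + 112*(m+5)*(m+8)"
    by (simp add: power2_eq_square algebra_simps)
  then show ?thesis using assms by simp
qed

lemma tight84_count_identity:
  fixes m S :: real
  defines "N \<equiv> (m+1)*(m+2)*(m+5)*(m+6)/252"
  assumes "0 \<le> m"
    and "8*(m-2)/((m+4)*(m+12)) * S + (N - 1) * (3/((m+2)*(m+4)) - 21/((m+8)*(m+12)))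
         = - gegenbauer4 m 1"
  shows "1008*(m-2)*(2*(m+8)*(m+12)*S - 14*(m+8)*(N - 1))
       = -((m+5)*(m+8)*(38*m^4 + 128*m^3 - 278*m^2 + 2896*m - 2784))"
proof -
  have p: "m+2 > 0" "m+4 > 0" "m + 8 > 0" "m + 12 > 0"
    using assms(2) by linarith+
  define R where "R = (m+4)*(m+12)*(- gegenbauer4 m 1 - (N - 1) * (3/((m+2)*(m+4)) - 21/((m+8)*(m+12))))"
  have AS: "8*(m-2)/((m+4)*(m+12)) * S
      = - gegenbauer4 m 1 - (N - 1) * (3/((m+2)*(m+4)) - 21/((m+8)*(m+12)))"
    using assms(3) by linarith
  have "8*(m-2)*S = (m+4)*(m+12) * (8*(m-2)/((m+4)*(m+12)) * S)"
    using p by simp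
  also have "\<dots> = R"
    by (simp only: AS R_def)
  finally have SR: "8*(m-2)*S = R" .
  have "1008*(m-2)*(2*(m+8)*(m+12)*S - 14*(m+8)*(N - 1))
      = 252*(m+8)*(m+12)*(8*(m-2)*S) - 1008*(m-2)*14*(m+8)*(N - 1)"
    by (simp add: algebra_simps)
  also have "\<dots> = 252*(m+8)*(m+12)*R - 1008*(m-2)*14*(m+8)*(N - 1)"
    by (simp only: SR)
  also have "\<dots> = -((m+5)*(m+8)*(38*m^4 + 128*m^3 - 278*m^2 + 2896*m - 2784))"
    unfolding R_def N_def gegenbauer4_def using p by (simp add: divide_simps; algebra)
  finally show ?thesis .
qed

locale tight84_configuration =
  fixes Y :: "'a set" and x0 :: 'a and t :: "'a \<Rightarrow> real" and m :: real
  assumes finite: "finite Y" and center: "x0 \<in> Y" "t x0 = 1" and dim: "0 \<le> m"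
    and card: "real (card Y) = (m+1)*(m+2)*(m+5)*(m+6)/252"
    and sum4: "(\<Sum>x\<in>Y. gegenbauer4 m (t x)) = 0"
    and sum8: "(\<Sum>x\<in>Y. gegenbauer8 m (t x)) = 0"
begin

lemma two_distances:
  assumes "x \<in> Y" "x \<noteq> x0"
  shows "(m+8)*(m+12)*t x^4 - 14*(m+8)*t x^2 + 21 = 0"
proof -
  define D f C where "D = (m+8)*(m+12)" and "f = 28*(m+4)*(m+5)/((m+8)*(m+10)*(m+12)^2)"
    and "C = 252*(m+1)*(m+5)/((m+2)*(m+6))"
  have "(\<Sum>x\<in>Y. (D*t x^4 - 14*(m+8)*t x^2 + 21)^2)
      = (\<Sum>x\<in>Y. D^2 * gegenbauer8 m (t x) + D^2 * f * gegenbauer4 m (t x) + C)"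
    using tight84_annihilator_identity[OF dim] unfolding D_def f_def C_def
    by (intro sum.cong) (simp_all add: algebra_simps)
  also have "\<dots> = D^2 * (\<Sum>x\<in>Y. gegenbauer8 m (t x)) + D^2 * f * (\<Sum>x\<in>Y. gegenbauer4 m (t x))
                  + real (card Y) * C"
    by (simp add: sum.distrib sum_distrib_left)
  also have "\<dots> = real (card Y) * C"
    using sum4 sum8 by simp
  also have "\<dots> = (D*t x0^4 - 14*(m+8)*t x0^2 + 21)^2"
  proof -
    have "m + 2 > 0" "m + 6 > 0"
      using dim by linarith+
    then show ?thesis
      unfolding card center(2) D_def C_def by (simp add: divide_simps; algebra)
  qed
  finally show ?thesis
    unfolding D_def by (rule sum_squares_eq_term_imp_zero[OF finite center(1) _ assms])
qed

lemma diophantine: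
  obtains e :: int
  where "(m+5)*(m+8)*(38*m^4 + 128*m^3 - 278*m^2 + 2896*m - 2784)^2 = 28*2016^2*(m-2)^2*(of_int e)^2"
proof -
  define Y' where "Y' = Y - {x0}"
  define N where "N = (m+1)*(m+2)*(m+5)*(m+6)/252"
  define v where "v x = 2*(m+8)*(m+12)*t x^2 - 14*(m+8)" for x
  define w where "w = sqrt (112*(m+5)*(m+8))"
  have root: "(m+8)*(m+12)*(t x^2)^2 - 14*(m+8)*t x^2 + 21 = 0" if "x \<in> Y'" for x
    using two_distances that unfolding Y'_def by (simp flip: power_mult)
  have w2: "w^2 = 112*(m+5)*(m+8)"
    unfolding w_def using dim by simp
  have "v x = w \<or> v x = - w" if "x \<in> Y'" for x
    using completed_square_at_root[OF root[OF that]] w2 unfolding v_def by (metis power2_eq_iff)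
  then obtain e :: int where e: "(\<Sum>x\<in>Y'. v x) = of_int e * w"
    using sum_plus_minus_eq_int_mult[of Y' v w] finite unfolding Y'_def by blast
  have card': "real (card Y') = N - 1"
    using card center(1) finite card_gt_0_iff[of Y] unfolding Y'_def N_def
    by (auto simp: of_nat_diff)
  have "(\<Sum>x\<in>Y'. gegenbauer4 m (t x)) = - gegenbauer4 m 1"
    using sum4 center finite unfolding Y'_def by (simp add: sum.remove)
  moreover have "(\<Sum>x\<in>Y'. gegenbauer4 m (t x))
      = 8*(m-2)/((m+4)*(m+12)) * (\<Sum>x\<in>Y'. t x^2) + (N - 1) * (3/((m+2)*(m+4)) - 21/((m+8)*(m+12)))"
    using gegenbauer4_at_root[OF dim] root card'
    by (simp add: sum.distrib sum_distrib_left flip: power_mult)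
  ultimately have "1008*(m-2)*(2*(m+8)*(m+12)*(\<Sum>x\<in>Y'. t x^2) - 14*(m+8)*(N - 1))
      = -((m+5)*(m+8)*(38*m^4 + 128*m^3 - 278*m^2 + 2896*m - 2784))"
    using tight84_count_identity[OF dim] unfolding N_def by simp
  moreover have "(\<Sum>x\<in>Y'. v x) = 2*(m+8)*(m+12)*(\<Sum>x\<in>Y'. t x^2) - 14*(m+8)*(N - 1)"
    unfolding v_def using card' by (simp add: sum_subtractf sum_distrib_left)
  ultimately have "(1008*(m-2)*(of_int e * w))^2
      = ((m+5)*(m+8)*(38*m^4 + 128*m^3 - 278*m^2 + 2896*m - 2784))^2"
    using e by simp
  moreover have "(1008*(m-2)*(of_int e * w))^2 = (m+5)*(m+8) * (28*2016^2*(m-2)^2*(of_int e)^2)"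
    unfolding power_mult_distrib w2 by algebra
  moreover have "((m+5)*(m+8)*(38*m^4 + 128*m^3 - 278*m^2 + 2896*m - 2784))^2
      = (m+5)*(m+8) * ((m+5)*(m+8)*(38*m^4 + 128*m^3 - 278*m^2 + 2896*m - 2784)^2)"
    by algebra
  ultimately have "(m+5)*(m+8) * (28*2016^2*(m-2)^2*(of_int e)^2)
      = (m+5)*(m+8) * ((m+5)*(m+8)*(38*m^4 + 128*m^3 - 278*m^2 + 2896*m - 2784)^2)"
    by argo
  moreover have "(m+5)*(m+8) \<noteq> 0"
    using dim by simp
  ultimately show thesis
    using that[of e] mult_cancel_left by (metis (no_types, lifting))
qed

end

section \<open>Arithmetic of the dimension\<close>

lemma dvd_prime_power_mult:
  fixes d m p :: nat
  assumes "d dvd p^a * m" "prime p"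
  obtains i e where "i \<le> a" "e dvd m" "d = p^i * e"
proof -
  obtain b e where "d = b * e" "b dvd p^a" "e dvd m"
    using division_decomp[OF assms(1)] by blast
  moreover from \<open>b dvd p^a\<close> obtain i where "i \<le> a" "b = p^i"
    by (auto simp: divides_primepow_nat[OF assms(2)])
  ultimately show thesis
    using that by blast
qed

lemma dvd_246960_cases:
  fixes d :: nat
  assumes "d dvd 246960"
  obtains i j k l where "i \<le> 4" "j \<le> 2" "k \<le> 1" "l \<le> 3" "d = 2^i * 3^j * 5^k * 7^l"
proof -
  have "d dvd 2^4 * (3^2 * (5^1 * 7^3))"
    using assms by simp
  then obtain i e where i: "i \<le> 4" "e dvd 3^2 * (5^1 * 7^3)" "d = 2^i * e"
    by (rule dvd_prime_power_mult) simp_all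
  from i(2) obtain j f where j: "j \<le> 2" "f dvd 5^1 * 7^3" "e = 3^j * f"
    by (rule dvd_prime_power_mult) simp_all
  from j(2) obtain k g where k: "k \<le> 1" "g dvd 7^3" "f = 5^k * g"
    by (rule dvd_prime_power_mult) simp_all
  obtain l where l: "l \<le> 3" "g = 7^l"
    using k(2) divides_primepow_nat[of 7 g 3] by auto
  show thesis
    using that[OF i(1) j(1) k(1) l(1)] i(3) j(3) k(3) l(2) by (simp add: mult.assoc)
qed

lemma square_mod_in_squares:
  fixes s m :: int
  assumes "0 < m"
  shows "s^2 mod m \<in> (\<lambda>r. r^2 mod m) ` set [0..m-1]"
  using assms by (intro image_eqI[of _ _ "s mod m"]) (simp_all add: power_mod)

definition square_mod_small_moduli :: "int \<Rightarrow> bool" where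
  "square_mod_small_moduli v \<longleftrightarrow> v mod 16 \<in> {0,1,4,9} \<and> v mod 13 \<in> {0,1,3,4,9,10,12}
     \<and> v mod 17 \<in> {0,1,2,4,8,9,13,15,16} \<and> v mod 11 \<in> {0,1,3,4,5,9}"

lemma square_mod_small_moduli_power2: "square_mod_small_moduli (s^2)"
proof -
  have "s^2 mod 16 \<in> {0,1,4,9}"
    using square_mod_in_squares[of 16 s] by (auto simp: upto.simps simp del: set_upto)
  moreover have "s^2 mod 13 \<in> {0,1,3,4,9,10,12}"
    using square_mod_in_squares[of 13 s] by (auto simp: upto.simps simp del: set_upto)
  moreover have "s^2 mod 17 \<in> {0,1,2,4,8,9,13,15,16}"
    using square_mod_in_squares[of 17 s] by (auto simp: upto.simps simp del: set_upto)
  moreover have "s^2 mod 11 \<in> {0,1,3,4,5,9}"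
    using square_mod_in_squares[of 11 s] by (auto simp: upto.simps simp del: set_upto)
  ultimately show ?thesis
    unfolding square_mod_small_moduli_def by blast
qed

definition tight84_admissible :: "int \<Rightarrow> bool" where
  "tight84_admissible n \<longleftrightarrow>
     square_mod_small_moduli (7*(n+5)*(n+8)) \<and> 252 dvd (n+1)*(n+2)*(n+5)*(n+6)"

text \<open>A finite computation over the 120 divisors of 246960; the congruence
  \<open>conj_cong\<close> stops each evaluation at the first failing test.\<close>

lemma not_tight84_admissible_divisor:
  assumes "i \<le> 4" "j \<le> 2" "k \<le> 1" "l \<le> 3"
  shows "\<not> tight84_admissible (2^i * 3^j * 5^k * 7^l + 2)"
proof -
  have "i \<in> {0,1,2,3,4}" "j \<in> {0,1,2}" "k \<in> {0,1}" "l \<in> {0,1,2,3}"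
    using assms by auto
  then show ?thesis
    by (elim insertE emptyE;
        simp add: tight84_admissible_def square_mod_small_moduli_def cong: conj_cong)
qed

lemma tight84_dimension_constraints:
  fixes n e :: int
  assumes "3 \<le> n"
    and "(n+5)*(n+8)*(38*n^4 + 128*n^3 - 278*n^2 + 2896*n - 2784)^2 = 28*2016^2*(n-2)^2*e^2"
  obtains s where "7*(n+5)*(n+8) = s^2" and "(n-2) dvd 246960"
proof -
  define Q where "Q = 38*n^4 + 128*n^3 - 278*n^2 + 2896*n - 2784"
  have "0 \<le> n^2 * (38*n^2 - 278)" "0 < 2896*n - 2784" "0 \<le> 128*n^3"
    using assms(1) power_mono[of 3 n 2] by simp_all
  moreover have "Q = n^2 * (38*n^2 - 278) + 128*n^3 + (2896*n - 2784)"
    unfolding Q_def by (simp add: algebra_simps power2_eq_square power4_eq_xxxx)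
  ultimately have "Q \<noteq> 0" by linarith
  have "(14*2016*(n-2)*e)^2 = 7*(28*2016^2*(n-2)^2*e^2)"
    by algebra
  also have "\<dots> = 7*((n+5)*(n+8) * Q^2)"
    using assms(2) unfolding Q_def by simp
  finally have E: "7*(n+5)*(n+8) * Q^2 = (14*2016*(n-2)*e)^2"
    by (metis mult.assoc)
  then have "is_nth_power 2 (7*(n+5)*(n+8))"
    using is_nth_power_mult_cancel_right[of 2 "Q^2" "7*(n+5)*(n+8)"] \<open>Q \<noteq> 0\<close>
    by (auto intro: is_nth_powerI)
  then obtain s where s: "7*(n+5)*(n+8) = s^2"
    by (auto elim: is_nth_powerE)
  have "(s*Q)^2 = (14*2016*(n-2)*e)^2"
    using E s by (simp add: power_mult_distrib)
  then obtain c where c: "s*Q = 14*2016*(n-2)*c"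
    unfolding power2_eq_iff by (metis mult_minus_right)
  have "7 * ((n+5)*(n+8)*Q) = s * (s*Q)"
    using s by (metis mult.assoc power2_eq_square)
  also have "\<dots> = 7 * (4032 * s * c * (n-2))"
    unfolding c by algebra
  finally have "(n+5)*(n+8)*Q = (n-2) * (4032 * s * c)"
    by (simp add: algebra_simps)
  then have "(n-2) dvd (n+5)*(n+8)*Q"
    by simp
  moreover have "(n+5)*(n+8)*Q
      = (n-2)*(38*n^5 + 698*n^4 + 4302*n^3 + 13006*n^2 + 49756*n + 179160) + 246960"
    unfolding Q_def by (simp add: algebra_simps eval_nat_numeral)
  ultimately have "(n-2) dvd 246960"
    by (metis dvd_add_right_iff dvd_triv_left)
  with s that show thesis by blast
qed

lemma no_tight84_dimension:
  fixes n e :: int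
  assumes "2 \<le> n" and "252 dvd (n+1)*(n+2)*(n+5)*(n+6)"
    and "(n+5)*(n+8)*(38*n^4 + 128*n^3 - 278*n^2 + 2896*n - 2784)^2 = 28*2016^2*(n-2)^2*e^2"
  shows False
proof (cases "n = 2")
  case True
  then show False using assms(2) by simp
next
  case False
  with assms(1) have "3 \<le> n" by simp
  then obtain s where s: "7*(n+5)*(n+8) = s^2" and dvd: "(n-2) dvd 246960"
    using tight84_dimension_constraints assms(3) by blast
  define d where "d = nat (n-2)"
  have d: "int d = n - 2"
    unfolding d_def using assms(1) by simp
  then have "int d dvd int 246960"
    using dvd by simp
  then have "d dvd 246960"
    by (simp only: int_dvd_int_iff)
  then obtain i j k l where ijkl: "i \<le> 4" "j \<le> 2" "k \<le> 1" "l \<le> 3"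
    and "d = 2^i * 3^j * 5^k * 7^l"
    by (rule dvd_246960_cases)
  then have "n = 2^i * 3^j * 5^k * 7^l + 2"
    using d by simp
  moreover have "tight84_admissible n"
    unfolding tight84_admissible_def using assms(2) s square_mod_small_moduli_power2[of s] by simp
  ultimately show False
    using not_tight84_admissible_divisor[OF ijkl] by simp
qed

lemma (in tight84_configuration) not_integer_dimension:
  assumes "m = of_int n" and "2 \<le> n"
  shows False
proof -
  obtain e :: int where "(m+5)*(m+8)*(38*m^4 + 128*m^3 - 278*m^2 + 2896*m - 2784)^2
      = 28*2016^2*(m-2)^2*(of_int e)^2"
    by (rule diophantine)
  then have "real_of_int ((n+5)*(n+8)*(38*n^4 + 128*n^3 - 278*n^2 + 2896*n - 2784)^2)
      = real_of_int (28*2016^2*(n-2)^2*e^2)"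
    unfolding assms(1) by simp
  then have "(n+5)*(n+8)*(38*n^4 + 128*n^3 - 278*n^2 + 2896*n - 2784)^2 = 28*2016^2*(n-2)^2*e^2"
    by (simp only: of_int_eq_iff)
  moreover have "real_of_int (int (card Y) * 252) = real_of_int ((n+1)*(n+2)*(n+5)*(n+6))"
    using card unfolding assms(1) by simp
  then have "252 dvd (n+1)*(n+2)*(n+5)*(n+6)"
    by (metis of_int_eq_iff dvd_triv_right)
  ultimately show False
    using no_tight84_dimension assms(2) by blast
qed

lemma tight84_configuration_of_design:
  fixes Y :: "(real^'n::finite) set"
  assumes design: "harmonic_index_design {8, 4} Y" and "x0 \<in> Y"
    and "real (card Y) = (real CARD('n) + 1) * (real CARD('n) + 2) *
                          (real CARD('n) + 5) * (real CARD('n) + 6) / 252"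
  shows "tight84_configuration Y x0 ((\<bullet>) x0) (real CARD('n))"
proof -
  have unit: "x0 \<bullet> x0 = 1"
    using assms(1,2) by (auto simp: harmonic_index_design_def dot_square_norm)
  obtain c4 c8 where c4: "harmonic_hpoly 4 c4"
      "\<And>x. x \<bullet> x = 1 \<Longrightarrow> hpoly_eval 4 c4 x = gegenbauer4 (real CARD('n)) (x0 \<bullet> x)"
    and c8: "harmonic_hpoly 8 c8"
      "\<And>x. x \<bullet> x = 1 \<Longrightarrow> hpoly_eval 8 c8 x = gegenbauer8 (real CARD('n)) (x0 \<bullet> x)"
    using zonal_harmonic_4[OF unit] zonal_harmonic_8[OF unit] by metis
  show ?thesis
    using design_sum_zonal[OF design _ c4] design_sum_zonal[OF design _ c8] assms unit
    by unfold_locales (auto simp: harmonic_index_design_def)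
qed

theorem theorem6p5:
  assumes "CARD('n::finite) \<ge> 2"
  shows "\<not> (\<exists>Y :: (real^'n) set. harmonic_index_design {8, 4} Y \<and>
            real (card Y) = (real CARD('n) + 1) * (real CARD('n) + 2) *
                            (real CARD('n) + 5) * (real CARD('n) + 6) / 252)"
proof
  assume "\<exists>Y :: (real^'n) set. harmonic_index_design {8, 4} Y \<and>
            real (card Y) = (real CARD('n) + 1) * (real CARD('n) + 2) *
                            (real CARD('n) + 5) * (real CARD('n) + 6) / 252"
  then obtain Y :: "(real^'n) set" where design: "harmonic_index_design {8, 4} Y"
    and card: "real (card Y) = (real CARD('n) + 1) * (real CARD('n) + 2) *
                              (real CARD('n) + 5) * (real CARD('n) + 6) / 252"
    by blast
  have "0 < real (card Y)"
    unfolding card by (intro divide_pos_pos mult_pos_pos) auto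
  then obtain x0 where "x0 \<in> Y"
    by (metis card.empty ex_in_conv less_irrefl of_nat_0)
  then interpret tight84_configuration Y x0 "(\<bullet>) x0" "real CARD('n)"
    using tight84_configuration_of_design design card by blast
  show False
    using not_integer_dimension[of "int CARD('n)"] assms by simp
qed

end
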